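(* If $G$ is a $K_3$-free graph, then $KB(G)=(KB_m(G))^2$ (as graphs on the common vertex set consisting of the bicliques of $G$).
   Context: All graphs are finite and simple. A biclique of a graph $G$ is a set $P\subseteq V(G)$ such that the induced subgraph $G[P]$ is a complete bipartite graph with both parts nonempty, and $P$ is inclusion-maximal with this property. Since $G[P]$ is connected, its bipartition into two nonempty independent sets $X,Y$ (every vertex of $X$ adjacent to every vertex of $Y$) is unique; we write $P=XY$ to mean $P=X\cup Y$ with $X,Y$ these two parts, called the sides of $P$. Two bicliques $P,Q$ of $G$ are mutually included if their sides can be named $P=X_PY_P$, $Q=X_QY_Q$ so that $X_Q\subsetneq X_P$ and $Y_P\subsetneq Y_Q$. The biclique graph $KB(G)$ has the set of bicliques of $G$ as vertex set, two distinct bicliques being adjacent iff they intersect. The mutually included biclique graph $KB_m(G)$ has the same vertex set, two distinct bicliques being adjacent iff they are mutually included. For a graph $H$, the square $H^2$ has vertex set $V(H)$, two distinct vertices being adjacent iff their distance in $H$ is at most $2$. *)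

theory Defs
  imports Main
begin

definition simple_graph :: "'a set \<Rightarrow> ('a \<Rightarrow> 'a \<Rightarrow> bool) \<Rightarrow> bool" where
  "simple_graph V E \<longleftrightarrow> finite V \<and> (\<forall>x y. E x y \<longrightarrow> x \<in> V \<and> y \<in> V)
     \<and> (\<forall>x y. E x y \<longrightarrow> E y x) \<and> (\<forall>x. \<not> E x x)"

definition triangle_free :: "'a set \<Rightarrow> ('a \<Rightarrow> 'a \<Rightarrow> bool) \<Rightarrow> bool" where
  "triangle_free V E \<longleftrightarrow> \<not> (\<exists>x\<in>V. \<exists>y\<in>V. \<exists>z\<in>V. E x y \<and> E y z \<and> E x z)"

definition independent :: "('a \<Rightarrow> 'a \<Rightarrow> bool) \<Rightarrow> 'a set \<Rightarrow> bool" where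
  "independent E S \<longleftrightarrow> (\<forall>x\<in>S. \<forall>y\<in>S. \<not> E x y)"

definition biclique_sides :: "'a set \<Rightarrow> ('a \<Rightarrow> 'a \<Rightarrow> bool) \<Rightarrow> 'a set \<Rightarrow> 'a set \<Rightarrow> bool" where
  "biclique_sides V E X Y \<longleftrightarrow> X \<subseteq> V \<and> Y \<subseteq> V \<and> X \<noteq> {} \<and> Y \<noteq> {} \<and> X \<inter> Y = {}
     \<and> independent E X \<and> independent E Y \<and> (\<forall>x\<in>X. \<forall>y\<in>Y. E x y)"

definition induces_complete_bipartite :: "'a set \<Rightarrow> ('a \<Rightarrow> 'a \<Rightarrow> bool) \<Rightarrow> 'a set \<Rightarrow> bool" where
  "induces_complete_bipartite V E P \<longleftrightarrow> (\<exists>X Y. P = X \<union> Y \<and> biclique_sides V E X Y)"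

definition is_biclique :: "'a set \<Rightarrow> ('a \<Rightarrow> 'a \<Rightarrow> bool) \<Rightarrow> 'a set \<Rightarrow> bool" where
  "is_biclique V E P \<longleftrightarrow> induces_complete_bipartite V E P
     \<and> (\<forall>Q. P \<subseteq> Q \<and> induces_complete_bipartite V E Q \<longrightarrow> Q = P)"

definition bicliques :: "'a set \<Rightarrow> ('a \<Rightarrow> 'a \<Rightarrow> bool) \<Rightarrow> 'a set set" where
  "bicliques V E = {P. is_biclique V E P}"

definition mutually_included :: "'a set \<Rightarrow> ('a \<Rightarrow> 'a \<Rightarrow> bool) \<Rightarrow> 'a set \<Rightarrow> 'a set \<Rightarrow> bool" where
  "mutually_included V E P Q \<longleftrightarrow> (\<exists>XP YP XQ YQ.
      P = XP \<union> YP \<and> biclique_sides V E XP YP \<and>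
      Q = XQ \<union> YQ \<and> biclique_sides V E XQ YQ \<and> XQ \<subset> XP \<and> YP \<subset> YQ)"

definition KB_adj :: "'a set \<Rightarrow> ('a \<Rightarrow> 'a \<Rightarrow> bool) \<Rightarrow> 'a set \<Rightarrow> 'a set \<Rightarrow> bool" where
  "KB_adj V E P Q \<longleftrightarrow> P \<in> bicliques V E \<and> Q \<in> bicliques V E \<and> P \<noteq> Q \<and> P \<inter> Q \<noteq> {}"

definition KBm_adj :: "'a set \<Rightarrow> ('a \<Rightarrow> 'a \<Rightarrow> bool) \<Rightarrow> 'a set \<Rightarrow> 'a set \<Rightarrow> bool" where
  "KBm_adj V E P Q \<longleftrightarrow> P \<in> bicliques V E \<and> Q \<in> bicliques V E \<and> P \<noteq> Q
     \<and> mutually_included V E P Q"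

definition square_adj :: "'b set \<Rightarrow> ('b \<Rightarrow> 'b \<Rightarrow> bool) \<Rightarrow> 'b \<Rightarrow> 'b \<Rightarrow> bool" where
  "square_adj W A u v \<longleftrightarrow> u \<in> W \<and> v \<in> W \<and> u \<noteq> v \<and> (A u v \<or> (\<exists>w\<in>W. A u w \<and> A w v))"

end

theory Submission
  imports Defs
begin

text \<open>In a triangle-free graph a biclique is the same as a pair of nonempty sets X, Y with
  X = N(Y) and Y = N(X), where N(S) is the common neighbourhood of S: a vertex of N(Y)
  missing from X could be added to X, since an edge inside X together with a vertex of Y
  would form a triangle.
  If bicliques P = XP YP and Q = XQ YQ share a vertex, named so that it lies in XP \<inter> XQ,
  then X = XP \<inter> XQ and Y = N(X) form a biclique R whose side Y contains YP \<union> YQ. So R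
  equals P or is mutually included with it, and likewise for Q: P and Q are at distance at
  most 2 in KBm(G).
  Conversely, mutually included bicliques intersect, and since the sides of a biclique are
  unique, a path P, R, Q in KBm(G) forces a side of P or of R into P \<inter> Q.\<close>

definition common_neighbours :: "'a set \<Rightarrow> ('a \<Rightarrow> 'a \<Rightarrow> bool) \<Rightarrow> 'a set \<Rightarrow> 'a set" where
  "common_neighbours V E S = {v \<in> V. \<forall>s\<in>S. E v s}"

lemma common_neighbours_antimono: "S \<subseteq> T \<Longrightarrow> common_neighbours V E T \<subseteq> common_neighbours V E S"
  unfolding common_neighbours_def by blast

lemma common_neighbours_Un:
  "common_neighbours V E (S \<union> T) = common_neighbours V E S \<inter> common_neighbours V E T"
  unfolding common_neighbours_def by blast

lemma subset_common_neighbours_common_neighbours: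
  "simple_graph V E \<Longrightarrow> S \<subseteq> V \<Longrightarrow> S \<subseteq> common_neighbours V E (common_neighbours V E S)"
  unfolding common_neighbours_def simple_graph_def by blast

lemma biclique_sides_swap:
  "simple_graph V E \<Longrightarrow> biclique_sides V E X Y \<Longrightarrow> biclique_sides V E Y X"
  unfolding biclique_sides_def simple_graph_def by blast

lemma biclique_sides_subset:
  assumes XY: "biclique_sides V E X Y" and AB: "biclique_sides V E A B"
    and sub: "X \<union> Y \<subseteq> A \<union> B" and x: "x \<in> X" "x \<in> A"
  shows "X \<subseteq> A \<and> Y \<subseteq> B"
proof -
  have YB: "Y \<subseteq> B"
  proof
    fix y assume "y \<in> Y"
    then have "E x y" using XY x unfolding biclique_sides_def by blast
    then show "y \<in> B" using AB x sub \<open>y \<in> Y\<close> unfolding biclique_sides_def independent_def by blast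
  qed
  obtain y where y: "y \<in> Y" using XY unfolding biclique_sides_def by blast
  have "X \<subseteq> A"
  proof
    fix x' assume "x' \<in> X"
    then have "E x' y" using XY y unfolding biclique_sides_def by blast
    then show "x' \<in> A" using AB YB y sub \<open>x' \<in> X\<close> unfolding biclique_sides_def independent_def by blast
  qed
  with YB show ?thesis by blast
qed

lemma biclique_sides_unique:
  assumes "simple_graph V E" "biclique_sides V E X Y" "biclique_sides V E A B" "X \<union> Y = A \<union> B"
  shows "(X = A \<and> Y = B) \<or> (X = B \<and> Y = A)"
proof -
  have disj: "X \<inter> Y = {}" "A \<inter> B = {}" using assms(2,3) unfolding biclique_sides_def by auto
  obtain x where x: "x \<in> X" using assms(2) unfolding biclique_sides_def by blast
  then consider "x \<in> A" | "x \<in> B" using assms(4) by blast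
  then show ?thesis
  proof cases
    case 1
    then show ?thesis using biclique_sides_subset[OF assms(2,3) _ x] assms(4) disj by blast
  next
    case 2
    then show ?thesis
      using biclique_sides_subset[OF assms(2) biclique_sides_swap[OF assms(1,3)] _ x] assms(4) disj
      by blast
  qed
qed

lemma complete_bipartite_obtain_sides_containing:
  assumes "simple_graph V E" "induces_complete_bipartite V E P" "v \<in> P"
  obtains X Y where "P = X \<union> Y" "biclique_sides V E X Y" "v \<in> X"
proof -
  obtain X Y where P: "P = X \<union> Y" and XY: "biclique_sides V E X Y"
    using assms(2) unfolding induces_complete_bipartite_def by blast
  show thesis
  proof (cases "v \<in> X")
    case True
    then show ?thesis using that P XY by blast
  next
    case False
    then show ?thesis using that[of Y X] P XY assms(3) biclique_sides_swap[OF assms(1)] by blast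
  qed
qed

lemma biclique_side_eq_common_neighbours:
  assumes sg: "simple_graph V E" and tf: "triangle_free V E"
    and bc: "is_biclique V E (X \<union> Y)" and XY: "biclique_sides V E X Y"
  shows "X = common_neighbours V E Y"
proof
  show "X \<subseteq> common_neighbours V E Y"
    using XY unfolding biclique_sides_def common_neighbours_def by blast
  show "common_neighbours V E Y \<subseteq> X"
  proof
    fix v assume v: "v \<in> common_neighbours V E Y"
    have "v \<notin> Y" using v sg unfolding common_neighbours_def simple_graph_def by blast
    obtain y where y: "y \<in> Y" using XY unfolding biclique_sides_def by blast
    have "independent E (insert v X)"
      unfolding independent_def
    proof (intro ballI notI)
      fix a b assume a: "a \<in> insert v X" and b: "b \<in> insert v X" and ab: "E a b"
      have ay: "E a y" and "E b y"
        using a b y v XY unfolding common_neighbours_def biclique_sides_def by auto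
      have "a \<in> V" "b \<in> V" "y \<in> V" using sg ab ay unfolding simple_graph_def by auto
      then show False using tf ab ay \<open>E b y\<close> unfolding triangle_free_def by blast
    qed
    then have "biclique_sides V E (insert v X) Y"
      using XY v \<open>v \<notin> Y\<close> unfolding biclique_sides_def common_neighbours_def by auto
    then have "induces_complete_bipartite V E (insert v X \<union> Y)"
      unfolding induces_complete_bipartite_def by blast
    moreover have "X \<union> Y \<subseteq> insert v X \<union> Y" by blast
    ultimately have "insert v X \<union> Y = X \<union> Y" using bc unfolding is_biclique_def by blast
    then show "v \<in> X" using \<open>v \<notin> Y\<close> by blast
  qed
qed

lemma biclique_sides_if_closed:
  assumes sg: "simple_graph V E" and tf: "triangle_free V E"
    and ne: "X \<noteq> {}" "Y \<noteq> {}"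
    and X: "X = common_neighbours V E Y" and Y: "Y = common_neighbours V E X"
  shows "biclique_sides V E X Y"
proof -
  have indep: "independent E S"
    if "S = common_neighbours V E T" "T \<noteq> {}" for S T
    unfolding independent_def
  proof (intro ballI notI)
    fix a b assume "a \<in> S" "b \<in> S" "E a b"
    obtain t where "t \<in> T" using \<open>T \<noteq> {}\<close> by blast
    then have "E a t" "E b t" "a \<in> V" "b \<in> V" "t \<in> V"
      using \<open>a \<in> S\<close> \<open>b \<in> S\<close> sg unfolding that(1) common_neighbours_def simple_graph_def by auto
    then show False using tf \<open>E a b\<close> unfolding triangle_free_def by blast
  qed
  have "X \<subseteq> V" using X unfolding common_neighbours_def by blast
  moreover have "Y \<subseteq> V" using Y unfolding common_neighbours_def by blast
  moreover have "X \<inter> Y = {}"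
    using X sg unfolding common_neighbours_def simple_graph_def by blast
  moreover have "\<forall>x\<in>X. \<forall>y\<in>Y. E x y"
    using Y sg unfolding common_neighbours_def simple_graph_def by blast
  ultimately show ?thesis
    unfolding biclique_sides_def using indep[OF X ne(2)] indep[OF Y ne(1)] ne by blast
qed

lemma is_biclique_if_closed:
  assumes sg: "simple_graph V E" and tf: "triangle_free V E"
    and ne: "X \<noteq> {}" "Y \<noteq> {}"
    and X: "X = common_neighbours V E Y" and Y: "Y = common_neighbours V E X"
  shows "is_biclique V E (X \<union> Y)"
  unfolding is_biclique_def
proof (intro conjI allI impI)
  have XY: "biclique_sides V E X Y" using biclique_sides_if_closed[OF assms] .
  then show "induces_complete_bipartite V E (X \<union> Y)"
    unfolding induces_complete_bipartite_def by blast
  fix Q assume Q: "X \<union> Y \<subseteq> Q \<and> induces_complete_bipartite V E Q"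
  obtain x where x: "x \<in> X" using ne by blast
  then obtain A B where QAB: "Q = A \<union> B" and AB: "biclique_sides V E A B" and "x \<in> A"
    using complete_bipartite_obtain_sides_containing[OF sg, of Q x] Q by blast
  then have XA: "X \<subseteq> A" and YB: "Y \<subseteq> B"
    using biclique_sides_subset[OF XY AB _ x] Q by auto
  have "A \<subseteq> common_neighbours V E B"
    using AB unfolding biclique_sides_def common_neighbours_def by blast
  also have "\<dots> \<subseteq> X" using common_neighbours_antimono[OF YB] X by simp
  finally have "A \<subseteq> X" .
  have "B \<subseteq> common_neighbours V E A"
    using biclique_sides_swap[OF sg AB] unfolding biclique_sides_def common_neighbours_def by blast
  also have "\<dots> \<subseteq> Y" using common_neighbours_antimono[OF XA] Y by simp
  finally have "B \<subseteq> Y" .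
  show "Q = X \<union> Y" using QAB XA YB \<open>A \<subseteq> X\<close> \<open>B \<subseteq> Y\<close> by blast
qed

lemma mutually_included_sym:
  assumes "simple_graph V E" "mutually_included V E P Q"
  shows "mutually_included V E Q P"
proof -
  obtain XP YP XQ YQ where "P = XP \<union> YP" "biclique_sides V E XP YP"
    "Q = XQ \<union> YQ" "biclique_sides V E XQ YQ" "XQ \<subset> XP" "YP \<subset> YQ"
    using assms(2) unfolding mutually_included_def by blast
  then show ?thesis
    unfolding mutually_included_def
    by (metis Un_commute biclique_sides_swap[OF assms(1)])
qed

lemma mutually_included_Int_nonempty:
  assumes "mutually_included V E P Q"
  shows "P \<inter> Q \<noteq> {}"
  using assms unfolding mutually_included_def biclique_sides_def by blast

lemma mutually_included_path_Int_nonempty: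
  assumes sg: "simple_graph V E"
    and "mutually_included V E P R" "mutually_included V E R Q"
  shows "P \<inter> Q \<noteq> {}"
proof -
  obtain XP YP XR YR where P: "P = XP \<union> YP" "YP \<noteq> {}"
    and R: "R = XR \<union> YR" "biclique_sides V E XR YR" "XR \<subset> XP" "YP \<subset> YR"
    using assms(2) unfolding mutually_included_def biclique_sides_def by blast
  obtain XR' YR' XQ YQ where R': "R = XR' \<union> YR'" "biclique_sides V E XR' YR'"
    and Q: "Q = XQ \<union> YQ" "YR' \<subset> YQ"
    using assms(3) unfolding mutually_included_def by blast
  have "XR \<noteq> {}" using R(2) unfolding biclique_sides_def by blast
  from biclique_sides_unique[OF sg R(2) R'(2)] R(1) R'(1)
  consider "YR = YR'" | "XR = YR'" by blast
  then show ?thesis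
  proof cases
    case 1
    then have "YP \<subseteq> P \<inter> Q" using P R(4) Q by blast
    then show ?thesis using P(2) by blast
  next
    case 2
    then have "XR \<subseteq> P \<inter> Q" using P R(3) Q by blast
    then show ?thesis using \<open>XR \<noteq> {}\<close> by blast
  qed
qed

lemma closed_sides_of_biclique:
  assumes sg: "simple_graph V E" and tf: "triangle_free V E"
    and "is_biclique V E (X \<union> Y)" "biclique_sides V E X Y"
  shows "X = common_neighbours V E Y" "Y = common_neighbours V E X"
  using biclique_side_eq_common_neighbours[OF sg tf] biclique_sides_swap[OF sg] assms(3,4)
  by (metis Un_commute)+

lemma biclique_eq_or_mutually_included_closure:
  assumes sg: "simple_graph V E" and tf: "triangle_free V E"
    and P: "P = XP \<union> YP" "is_biclique V E P" "biclique_sides V E XP YP"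
    and R: "XR \<noteq> {}" "XR \<subseteq> XP" "XR = common_neighbours V E YR" "YR = common_neighbours V E XR"
  shows "XR \<union> YR = P \<or> mutually_included V E P (XR \<union> YR)"
proof -
  note closedP = closed_sides_of_biclique[OF sg tf P(2)[unfolded P(1)] P(3)]
  have "YP \<subseteq> YR" using common_neighbours_antimono[OF R(2)] closedP(2) R(4) by simp
  then have "YR \<noteq> {}" using P(3) unfolding biclique_sides_def by blast
  have sidesR: "biclique_sides V E XR YR"
    using biclique_sides_if_closed[OF sg tf R(1) \<open>YR \<noteq> {}\<close> R(3,4)] .
  show ?thesis
  proof (cases "XR = XP")
    case True
    then show ?thesis using closedP(2) R(4) P(1) by simp
  next
    case False
    then have "YP \<noteq> YR" using closedP(1) R(3) by blast
    then show ?thesis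
      using False \<open>YP \<subseteq> YR\<close> R(2) P(1,3) sidesR unfolding mutually_included_def by blast
  qed
qed

lemma intersecting_bicliques_common_closure:
  assumes sg: "simple_graph V E" and tf: "triangle_free V E"
    and P: "P \<in> bicliques V E" and Q: "Q \<in> bicliques V E" and v: "v \<in> P \<inter> Q"
  obtains R where "R \<in> bicliques V E"
    "R = P \<or> mutually_included V E P R" "R = Q \<or> mutually_included V E Q R"
proof -
  have icb: "induces_complete_bipartite V E S" if "S \<in> bicliques V E" for S
    using that unfolding bicliques_def is_biclique_def by blast
  obtain XP YP where XP: "P = XP \<union> YP" "biclique_sides V E XP YP" "v \<in> XP"
    using complete_bipartite_obtain_sides_containing[OF sg icb[OF P]] v by blast
  obtain XQ YQ where XQ: "Q = XQ \<union> YQ" "biclique_sides V E XQ YQ" "v \<in> XQ"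
    using complete_bipartite_obtain_sides_containing[OF sg icb[OF Q]] v by blast
  have bcP: "is_biclique V E P" and bcQ: "is_biclique V E Q"
    using P Q unfolding bicliques_def by auto
  note closedP = closed_sides_of_biclique[OF sg tf bcP[unfolded XP(1)] XP(2)]
  note closedQ = closed_sides_of_biclique[OF sg tf bcQ[unfolded XQ(1)] XQ(2)]
  define XR where "XR = XP \<inter> XQ"
  define YR where "YR = common_neighbours V E XR"
  have "XR \<noteq> {}" using XP(3) XQ(3) XR_def by blast
  have "YP \<union> YQ \<subseteq> YR"
    using common_neighbours_antimono[of XR XP V E] common_neighbours_antimono[of XR XQ V E]
      closedP(2) closedQ(2) unfolding XR_def YR_def by blast
  have XR_closed: "XR = common_neighbours V E YR"
  proof
    have "XR \<subseteq> V" using XP(2) unfolding XR_def biclique_sides_def by blast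
    then show "XR \<subseteq> common_neighbours V E YR"
      unfolding YR_def using subset_common_neighbours_common_neighbours[OF sg] by blast
    have "XR = common_neighbours V E (YP \<union> YQ)"
      unfolding common_neighbours_Un XR_def using closedP(1) closedQ(1) by simp
    then show "common_neighbours V E YR \<subseteq> XR"
      using common_neighbours_antimono[OF \<open>YP \<union> YQ \<subseteq> YR\<close>] by simp
  qed
  have "YR \<noteq> {}" using \<open>YP \<union> YQ \<subseteq> YR\<close> XP(2) unfolding biclique_sides_def by blast
  show thesis
  proof (rule that)
    show "XR \<union> YR \<in> bicliques V E"
      using is_biclique_if_closed[OF sg tf \<open>XR \<noteq> {}\<close> \<open>YR \<noteq> {}\<close> XR_closed YR_def]
      unfolding bicliques_def by blast
    show "XR \<union> YR = P \<or> mutually_included V E P (XR \<union> YR)"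
      using biclique_eq_or_mutually_included_closure
          [OF sg tf XP(1) bcP XP(2) \<open>XR \<noteq> {}\<close> _ XR_closed YR_def]
      unfolding XR_def by blast
    show "XR \<union> YR = Q \<or> mutually_included V E Q (XR \<union> YR)"
      using biclique_eq_or_mutually_included_closure
          [OF sg tf XQ(1) bcQ XQ(2) \<open>XR \<noteq> {}\<close> _ XR_closed YR_def]
      unfolding XR_def by blast
  qed
qed

lemma square_adj_if_joined:
  assumes "P \<in> W" "Q \<in> W" "R \<in> W" "P \<noteq> Q"
    and "R = P \<or> A P R" "R = Q \<or> A R Q"
  shows "square_adj W A P Q"
  using assms unfolding square_adj_def by blast

theorem theorem1:
  fixes V :: "'a set" and E :: "'a \<Rightarrow> 'a \<Rightarrow> bool"
  assumes "simple_graph V E" and "triangle_free V E"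
  shows "KB_adj V E = square_adj (bicliques V E) (KBm_adj V E)"
proof (intro ext iffI)
  fix P Q assume "KB_adj V E P Q"
  then have P: "P \<in> bicliques V E" and Q: "Q \<in> bicliques V E" and "P \<noteq> Q"
    and "P \<inter> Q \<noteq> {}" unfolding KB_adj_def by auto
  then obtain v where "v \<in> P \<inter> Q" by blast
  then obtain R where R: "R \<in> bicliques V E"
    and PR: "R = P \<or> mutually_included V E P R" and QR: "R = Q \<or> mutually_included V E Q R"
    using intersecting_bicliques_common_closure[OF assms P Q] by blast
  have "R = P \<or> KBm_adj V E P R"
    using PR P R unfolding KBm_adj_def by blast
  moreover have "R = Q \<or> KBm_adj V E R Q"
    using QR Q R mutually_included_sym[OF assms(1), of Q R] unfolding KBm_adj_def by blast
  ultimately show "square_adj (bicliques V E) (KBm_adj V E) P Q"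
    using square_adj_if_joined[OF P Q R \<open>P \<noteq> Q\<close>] by blast
next
  fix P Q assume "square_adj (bicliques V E) (KBm_adj V E) P Q"
  then have "P \<in> bicliques V E" "Q \<in> bicliques V E" "P \<noteq> Q"
    and "mutually_included V E P Q \<or> (\<exists>R. mutually_included V E P R \<and> mutually_included V E R Q)"
    unfolding square_adj_def KBm_adj_def by auto
  then show "KB_adj V E P Q"
    using mutually_included_Int_nonempty mutually_included_path_Int_nonempty[OF assms(1)]
    unfolding KB_adj_def by blast
qed

end
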